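(* Let $y\in\mathbb R^n$ have distinct values $\lambda_1<\cdots<\lambda_s$ with multiplicities $m_1,\ldots,m_s$, and let $0\le\gamma<1$. With $x_n:=1-\gamma-x_1-\cdots-x_{n-1}$, $$\int_0^{1-\gamma}\int_0^{1-\gamma-x_1}\cdots\int_0^{1-\gamma-x_1-\cdots-x_{n-2}}e^{\langle y,x\rangle}\,dx_{n-1}\cdots dx_1=\frac{\det M(y,1-\gamma)}{\prod_{i<j}(\lambda_j-\lambda_i)^{m_im_j}}.$$ Moreover only the final row of $M(y,1-\gamma)$ depends on $\gamma$.
   Context: For $z\in\mathbb R^n$ with distinct values $\kappa_1<\cdots<\kappa_s$ of multiplicities $m_1,\ldots,m_s$ and $c\in\mathbb R$, $M(z,c)$ is the $n\times n$ matrix with columns indexed by pairs $(i,j)$, $1\le i\le s$, $0\le j\le m_i-1$ (lexicographic order), rows $r=0,\ldots,n-2$ plus a final row; the entry in row $r$, column $(i,j)$ is $\binom rj\kappa_i^{r-j}$ ($0$ if $j>r$), and the final-row entry in column $(i,j)$ is $c^je^{c\kappa_i}/j!$. *)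

theory Defs
  imports "HOL-Analysis.Analysis" "Jordan_Normal_Form.Determinant"
begin

text \<open>Vectors in R^n are functions nat => real, only the entries 0..n-1 matter.\<close>

definition dvals :: "(nat \<Rightarrow> real) \<Rightarrow> nat \<Rightarrow> real list" where
  "dvals z n = sorted_list_of_set (z ` {..<n})"

definition mult :: "(nat \<Rightarrow> real) \<Rightarrow> nat \<Rightarrow> real \<Rightarrow> nat" where
  "mult z n v = card {k. k < n \<and> z k = v}"

text \<open>Column labels (i,j), 0 <= i < s, 0 <= j < m_i, in lexicographic order (0-based).\<close>
definition col_labels :: "(nat \<Rightarrow> real) \<Rightarrow> nat \<Rightarrow> (nat \<times> nat) list" where
  "col_labels z n = concat (map (\<lambda>i. map (\<lambda>j. (i, j)) [0..<mult z n (dvals z n ! i)])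
                                [0..<length (dvals z n)])"

definition Mmat :: "(nat \<Rightarrow> real) \<Rightarrow> nat \<Rightarrow> real \<Rightarrow> real mat" where
  "Mmat z n c = mat n n (\<lambda>(r, col).
      (let i = fst (col_labels z n ! col); j = snd (col_labels z n ! col); k = dvals z n ! i in
       if r < n - 1 then (if j \<le> r then of_nat (r choose j) * k ^ (r - j) else 0)
       else c ^ j * exp (c * k) / fact j))"

text \<open>Iterated integral: integrate coordinate d from 0 to r, then coordinate d+1 from 0 to
  r - x_d, etc., k coordinates in total; x holds the already fixed coordinates.\<close>
fun iter_int :: "nat \<Rightarrow> nat \<Rightarrow> real \<Rightarrow> ((nat \<Rightarrow> real) \<Rightarrow> real) \<Rightarrow> (nat \<Rightarrow> real) \<Rightarrow> real" where
  "iter_int 0 d r F x = F x"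
| "iter_int (Suc k) d r F x = (LBINT t=0..r. iter_int k (Suc d) (r - t) F (x(d := t)))"

end

theory Submission
  imports Defs "HOL-Computational_Algebra.Polynomial_FPS"
begin

text \<open>Both sides equal the divided difference of \<open>t \<mapsto> exp (r t)\<close>, \<open>r = 1 - \<gamma>\<close>, at the
  nodes \<open>y\<^sub>0, \<dots>, y\<^sub>n\<^sub>-\<^sub>1\<close>. For the integral this follows by induction on \<open>n\<close>: adding a node
  is a convolution with an exponential, and the simplex integral is an iterated such convolution.
  For the determinant, expand the exponentials in the last row of \<open>M\<close> into power series:
  \<open>det M\<close> becomes \<open>\<Sum>\<^sub>m e\<^sub>m r\<^sup>m / m!\<close>, where \<open>e\<^sub>m\<close> is the determinant with last row
  the Taylor data of \<open>t\<^sup>m\<close> at the nodes. Each column annihilates \<open>\<Prod>\<^sub>k (t - y\<^sub>k)\<close>, so the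
  \<open>e\<^sub>m\<close> satisfy the recurrence with this characteristic polynomial, and \<open>e\<^sub>m = 0\<close> for
  \<open>m < n - 1\<close>; hence \<open>e\<^sub>m = W h\<^sub>m\<^sub>-\<^sub>n\<^sub>+\<^sub>1(y)\<close> with \<open>W = e\<^sub>n\<^sub>-\<^sub>1\<close> the confluent Vandermonde
  determinant. Finally \<open>W\<close> is evaluated by making the Vandermonde matrix upper triangular
  with the unitriangular change of basis \<open>t\<^sup>r \<mapsto> \<Prod>\<^sub>l\<^sub><\<^sub>r (t - z\<^sub>l)\<close>, \<open>z\<^sub>l\<close> the node of column \<open>l\<close>.\<close>

text \<open>\<open>divdiff_pow n y m\<close> is the divided difference of \<open>t\<^sup>m\<close> at \<open>y\<^sub>0, \<dots>, y\<^sub>n\<^sub>-\<^sub>1\<close>, i.e. the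
  complete homogeneous symmetric polynomial of degree \<open>m + 1 - n\<close> in them, and
  \<open>divdiff_exp n y r\<close> is the divided difference of \<open>t \<mapsto> exp (r t)\<close>.\<close>
fun divdiff_pow :: "nat \<Rightarrow> (nat \<Rightarrow> real) \<Rightarrow> nat \<Rightarrow> real" where
  "divdiff_pow 0 y m = 0"
| "divdiff_pow (Suc 0) y m = y 0 ^ m"
| "divdiff_pow (Suc (Suc n)) y 0 = 0"
| "divdiff_pow (Suc (Suc n)) y (Suc m) =
     (\<Sum>p\<le>m. y 0 ^ p * divdiff_pow (Suc n) (\<lambda>i. y (Suc i)) (m - p))"

lemma divdiff_pow_Suc_Suc:
  "divdiff_pow (Suc (Suc n)) y (Suc m) =
     divdiff_pow (Suc n) (\<lambda>i. y (Suc i)) m + y 0 * divdiff_pow (Suc (Suc n)) y m"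
proof (cases m)
  case (Suc k)
  have "divdiff_pow (Suc (Suc n)) y (Suc m) =
      (\<Sum>p\<le>Suc k. y 0 ^ p * divdiff_pow (Suc n) (\<lambda>i. y (Suc i)) (Suc k - p))"
    using Suc by simp
  also have "\<dots> = divdiff_pow (Suc n) (\<lambda>i. y (Suc i)) m +
      (\<Sum>p\<le>k. y 0 ^ Suc p * divdiff_pow (Suc n) (\<lambda>i. y (Suc i)) (k - p))"
    using Suc by (subst sum.atMost_Suc_shift) simp
  also have "(\<Sum>p\<le>k. y 0 ^ Suc p * divdiff_pow (Suc n) (\<lambda>i. y (Suc i)) (k - p)) =
      y 0 * divdiff_pow (Suc (Suc n)) y m"
    using Suc by (simp add: sum_distrib_left mult.assoc)
  finally show ?thesis .
qed simp

lemma divdiff_pow_bound: "\<exists>K\<ge>1. \<forall>m. \<bar>divdiff_pow (Suc n) y m\<bar> \<le> K ^ m"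
proof (induction n arbitrary: y)
  case 0
  show ?case by (rule exI[of _ "max 1 \<bar>y 0\<bar>"]) (auto simp: power_abs intro: power_mono)
next
  case (Suc n)
  obtain K where K: "K \<ge> 1" "\<And>m. \<bar>divdiff_pow (Suc n) (\<lambda>i. y (Suc i)) m\<bar> \<le> K ^ m"
    using Suc.IH by blast
  define L where "L = max K \<bar>y 0\<bar>"
  have "L \<ge> 1" using K unfolding L_def by simp
  have term_bound: "\<bar>y 0 ^ p * divdiff_pow (Suc n) (\<lambda>i. y (Suc i)) (k - p)\<bar> \<le> L ^ k"
    if "p \<le> k" for p k
  proof -
    have "\<bar>y 0 ^ p\<bar> \<le> L ^ p" unfolding power_abs L_def by (rule power_mono) auto
    moreover have "\<bar>divdiff_pow (Suc n) (\<lambda>i. y (Suc i)) (k - p)\<bar> \<le> L ^ (k - p)"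
      using K(2)[of "k - p"] power_mono[of K L "k - p"] K(1) unfolding L_def by force
    ultimately have "\<bar>y 0 ^ p * divdiff_pow (Suc n) (\<lambda>i. y (Suc i)) (k - p)\<bar> \<le> L ^ p * L ^ (k - p)"
      by (simp add: abs_mult mult_mono)
    with that show ?thesis by (simp add: power_add[symmetric])
  qed
  have "\<bar>divdiff_pow (Suc (Suc n)) y (Suc k)\<bar> \<le> (2 * L) ^ Suc k" for k
  proof -
    have "\<bar>divdiff_pow (Suc (Suc n)) y (Suc k)\<bar> \<le>
        (\<Sum>p\<le>k. \<bar>y 0 ^ p * divdiff_pow (Suc n) (\<lambda>i. y (Suc i)) (k - p)\<bar>)"
      by (simp only: divdiff_pow.simps sum_abs)
    also have "\<dots> \<le> (\<Sum>p\<le>k. L ^ k)"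
      by (rule sum_mono) (simp add: term_bound)
    also have "\<dots> = real (Suc k) * L ^ k" by simp
    also have "\<dots> \<le> 2 ^ Suc k * L ^ Suc k"
    proof (rule mult_mono)
      show "real (Suc k) \<le> 2 ^ Suc k"
        using of_nat_less_two_power[of "Suc k", where 'a=real] by linarith
    qed (use \<open>L \<ge> 1\<close> in \<open>auto simp: power_increasing\<close>)
    finally show ?thesis by (simp only: power_mult_distrib)
  qed
  then have "\<bar>divdiff_pow (Suc (Suc n)) y m\<bar> \<le> (2 * L) ^ m" for m
    by (cases m) simp_all
  then show ?case using \<open>L \<ge> 1\<close> by (intro exI[of _ "2 * L"]) auto
qed

lemma fps_geometric_mult: "Abs_fps (\<lambda>m. (a::'a::comm_ring_1) ^ m) * (1 - fps_const a * fps_X) = 1"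
proof -
  have "Abs_fps (\<lambda>m. a ^ m) * (1 - fps_const a * fps_X) =
     Abs_fps (\<lambda>m. a ^ m) - fps_const a * (fps_X * Abs_fps (\<lambda>m. a ^ m))"
    by (simp add: algebra_simps)
  then show ?thesis
    by (auto intro!: fps_ext simp: power_Suc[symmetric] simp del: power_Suc)
qed

lemma fps_divdiff_pow:
  "Abs_fps (divdiff_pow (Suc n) y) * (\<Prod>k<Suc n. 1 - fps_const (y k) * fps_X) = fps_X ^ n"
proof (induction n arbitrary: y)
  case 0
  show ?case using fps_geometric_mult[of "y 0"] by simp
next
  case (Suc n)
  have "Abs_fps (divdiff_pow (Suc (Suc n)) y) =
      fps_X * (Abs_fps (\<lambda>m. y 0 ^ m) * Abs_fps (divdiff_pow (Suc n) (\<lambda>i. y (Suc i))))"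
  proof (rule fps_ext)
    fix m show "fps_nth (Abs_fps (divdiff_pow (Suc (Suc n)) y)) m =
      fps_nth (fps_X * (Abs_fps (\<lambda>m. y 0 ^ m) * Abs_fps (divdiff_pow (Suc n) (\<lambda>i. y (Suc i))))) m"
      by (cases m) (simp_all add: fps_mult_nth[of "Abs_fps _"] atLeast0AtMost)
  qed
  moreover have "(\<Prod>k<Suc (Suc n). 1 - fps_const (y k) * fps_X) =
    (1 - fps_const (y 0) * fps_X) * (\<Prod>k<Suc n. 1 - fps_const (y (Suc k)) * fps_X)"
    by (subst prod.lessThan_Suc_shift) simp
  ultimately have "Abs_fps (divdiff_pow (Suc (Suc n)) y) * (\<Prod>k<Suc (Suc n). 1 - fps_const (y k) * fps_X) =
     fps_X * (Abs_fps (\<lambda>m. y 0 ^ m) * (1 - fps_const (y 0) * fps_X)) *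
     (Abs_fps (divdiff_pow (Suc n) (\<lambda>i. y (Suc i))) * (\<Prod>k<Suc n. 1 - fps_const (y (Suc k)) * fps_X))"
    by (simp add: mult_ac)
  then show ?case unfolding fps_geometric_mult Suc.IH by simp
qed

lemma fps_of_poly_reflect_linear: "fps_of_poly (reflect_poly [:- a, 1:]) = 1 - fps_const a * fps_X"
  for a :: real
  by (rule fps_ext) (auto simp: reflect_poly_def coeff_pCons split: nat.split)

definition divdiff_exp :: "nat \<Rightarrow> (nat \<Rightarrow> real) \<Rightarrow> real \<Rightarrow> real" where
  "divdiff_exp n y r = (\<Sum>m. divdiff_pow n y m / fact m * r ^ m)"

lemma summable_divdiff_exp: "summable (\<lambda>m. divdiff_pow (Suc n) y m / fact m * r ^ m)"
proof -
  obtain K where K: "\<And>m. \<bar>divdiff_pow (Suc n) y m\<bar> \<le> K ^ m"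
    using divdiff_pow_bound by blast
  have norm_bound: "norm (divdiff_pow (Suc n) y m / fact m * r ^ m) \<le> inverse (fact m) * (K * \<bar>r\<bar>) ^ m" for m
  proof -
    have "norm (divdiff_pow (Suc n) y m / fact m * r ^ m) = \<bar>divdiff_pow (Suc n) y m\<bar> * \<bar>r\<bar> ^ m / fact m"
      by (simp add: abs_mult power_abs)
    also have "\<dots> \<le> K ^ m * \<bar>r\<bar> ^ m / fact m"
      using K[of m] by (intro divide_right_mono mult_right_mono) auto
    finally show ?thesis by (simp add: power_mult_distrib field_simps)
  qed
  show ?thesis
    by (rule summable_comparison_test[OF _ summable_exp[of "K * \<bar>r\<bar>"]]) (use norm_bound in blast)
qed

lemma divdiff_exp_has_field_derivative_series:
  "(divdiff_exp (Suc n) y has_field_derivative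
     (\<Sum>m. divdiff_pow (Suc n) y (Suc m) / fact m * r ^ m)) (at r)"
proof -
  have "diffs (\<lambda>m. divdiff_pow (Suc n) y m / fact m) = (\<lambda>m. divdiff_pow (Suc n) y (Suc m) / fact m)"
    by (simp add: diffs_def fun_eq_iff field_simps del: of_nat_Suc)
  moreover have "((\<lambda>r. \<Sum>m. divdiff_pow (Suc n) y m / fact m * r ^ m) has_field_derivative
      (\<Sum>m. diffs (\<lambda>m. divdiff_pow (Suc n) y m / fact m) m * r ^ m)) (at r)"
    by (rule termdiffs_strong_converges_everywhere) (rule summable_divdiff_exp)
  ultimately show ?thesis unfolding divdiff_exp_def[abs_def] by simp
qed

lemma isCont_divdiff_exp: "isCont (divdiff_exp (Suc n) y) r"
  using divdiff_exp_has_field_derivative_series DERIV_isCont by blast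

lemma divdiff_exp_has_field_derivative:
  "(divdiff_exp (Suc (Suc n)) y has_field_derivative
     divdiff_exp (Suc n) (\<lambda>i. y (Suc i)) r + y 0 * divdiff_exp (Suc (Suc n)) y r) (at r)"
proof -
  have "(\<Sum>m. divdiff_pow (Suc (Suc n)) y (Suc m) / fact m * r ^ m) =
        (\<Sum>m. divdiff_pow (Suc n) (\<lambda>i. y (Suc i)) m / fact m * r ^ m +
              y 0 * (divdiff_pow (Suc (Suc n)) y m / fact m * r ^ m))"
    by (simp only: divdiff_pow_Suc_Suc) (simp add: algebra_simps add_divide_distrib)
  also have "\<dots> = (\<Sum>m. divdiff_pow (Suc n) (\<lambda>i. y (Suc i)) m / fact m * r ^ m) +
      (\<Sum>m. y 0 * (divdiff_pow (Suc (Suc n)) y m / fact m * r ^ m))"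
    by (rule suminf_add[OF summable_divdiff_exp summable_mult[OF summable_divdiff_exp], symmetric])
  also have "\<dots> = divdiff_exp (Suc n) (\<lambda>i. y (Suc i)) r + y 0 * divdiff_exp (Suc (Suc n)) y r"
    unfolding divdiff_exp_def suminf_mult[OF summable_divdiff_exp] ..
  finally show ?thesis using divdiff_exp_has_field_derivative_series[of "Suc n" y r] by simp
qed

lemma divdiff_exp_one_node: "divdiff_exp (Suc 0) y r = exp (y 0 * r)"
  unfolding divdiff_exp_def exp_def by (simp add: power_mult_distrib divide_inverse mult_ac)

lemma divdiff_exp_at_0: "divdiff_exp (Suc (Suc n)) y 0 = 0"
proof -
  have "(\<lambda>m. divdiff_pow (Suc (Suc n)) y m / fact m * 0 ^ m) = (\<lambda>_. 0)"
    by (rule ext, case_tac m) simp_all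
  then show ?thesis unfolding divdiff_exp_def by simp
qed

lemma divdiff_exp_convolution:
  assumes "r \<ge> 0"
  shows "(LBINT t=0..r. exp (y 0 * t) * divdiff_exp (Suc n) (\<lambda>i. y (Suc i)) (r - t)) =
         divdiff_exp (Suc (Suc n)) y r"
proof -
  define H where "H = divdiff_exp (Suc (Suc n)) y"
  define f where "f = divdiff_exp (Suc n) (\<lambda>i. y (Suc i))"
  define F where "F = (\<lambda>t. - exp (y 0 * t) * H (r - t))"
  have "(LBINT t=ereal 0..ereal r. exp (y 0 * t) * f (r - t)) = F r - F 0"
  proof (rule interval_integral_FTC_finite)
    show "continuous_on {min 0 r..max 0 r} (\<lambda>t. exp (y 0 * t) * f (r - t))"
      unfolding f_def
      by (intro continuous_at_imp_continuous_on ballI continuous_intros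
            isCont_o2[OF _ isCont_divdiff_exp])
    fix t
    have "(H has_real_derivative f (r - t) + y 0 * H (r - t)) (at (r - t))"
      unfolding H_def f_def by (rule divdiff_exp_has_field_derivative)
    then have "((\<lambda>t. H (r - t)) has_real_derivative (f (r - t) + y 0 * H (r - t)) * (- 1)) (at t)"
      by (rule DERIV_chain2) (auto intro!: derivative_eq_intros)
    then have H_shift: "((\<lambda>t. H (r - t)) has_real_derivative - (f (r - t) + y 0 * H (r - t))) (at t)"
      by simp
    have "(F has_real_derivative exp (y 0 * t) * f (r - t)) (at t)"
      unfolding F_def by (rule derivative_eq_intros H_shift | simp)+ (simp add: algebra_simps)
    then show "(F has_vector_derivative exp (y 0 * t) * f (r - t)) (at t within {min 0 r..max 0 r})"
      by (simp add: has_real_derivative_iff_has_vector_derivative has_vector_derivative_at_within)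
  qed
  also have "\<dots> = H r" unfolding F_def H_def by (simp add: divdiff_exp_at_0)
  finally show ?thesis unfolding H_def f_def by (simp add: zero_ereal_def)
qed

lemma iter_int_exp_linear:
  fixes y :: "nat \<Rightarrow> real" and C :: real and D :: nat
  defines "F \<equiv> (\<lambda>x. exp ((\<Sum>i<D. y i * x i) + y D * (C - (\<Sum>i<D. x i))))"
  assumes "d + k = D" and "r = C - (\<Sum>i<d. x i)" and "r \<ge> 0"
  shows "iter_int k d r F x = exp (\<Sum>i<d. y i * x i) * divdiff_exp (Suc k) (\<lambda>i. y (d + i)) r"
  using assms(2-4)
proof (induction k arbitrary: d r x)
  case 0
  then show ?case unfolding F_def by (simp add: divdiff_exp_one_node exp_add)
next
  case (Suc k)
  have "iter_int k (Suc d) (r - t) F (x(d := t)) =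
      exp (\<Sum>i<d. y i * x i) * (exp (y d * t) * divdiff_exp (Suc k) (\<lambda>i. y (d + Suc i)) (r - t))"
    if "t \<in> einterval (min 0 (ereal r)) (max 0 (ereal r))" for t
  proof -
    from that Suc.prems(3) have "0 \<le> t" "t \<le> r" by (auto simp: einterval_def)
    have sums_upd: "(\<Sum>i<d. (x(d := t)) i) = (\<Sum>i<d. x i)" "(\<Sum>i<d. y i * (x(d := t)) i) = (\<Sum>i<d. y i * x i)"
      by (auto intro: sum.cong)
    moreover have "iter_int k (Suc d) (r - t) F (x(d := t)) =
        exp (\<Sum>i<Suc d. y i * (x(d := t)) i) * divdiff_exp (Suc k) (\<lambda>i. y (Suc d + i)) (r - t)"
      by (rule Suc.IH) (use Suc.prems \<open>t \<le> r\<close> sums_upd in auto)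
    ultimately show ?thesis by (simp add: exp_add)
  qed
  then have "iter_int (Suc k) d r F x =
      (LBINT t=0..r. exp (\<Sum>i<d. y i * x i) * (exp (y d * t) * divdiff_exp (Suc k) (\<lambda>i. y (d + Suc i)) (r - t)))"
    unfolding iter_int.simps by (rule interval_integral_cong)
  also have "\<dots> = exp (\<Sum>i<d. y i * x i) *
      (LBINT t=0..r. exp (y d * t) * divdiff_exp (Suc k) (\<lambda>i. y (d + Suc i)) (r - t))"
    by simp
  also have "(LBINT t=0..r. exp (y d * t) * divdiff_exp (Suc k) (\<lambda>i. y (d + Suc i)) (r - t)) =
      divdiff_exp (Suc (Suc k)) (\<lambda>i. y (d + i)) r"
    using divdiff_exp_convolution[of r "\<lambda>i. y (d + i)" k] Suc.prems(3) by simp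
  finally show ?case .
qed

text \<open>The coefficient of \<open>(X - a)\<^sup>j\<close> in \<open>p\<close>, i.e. \<open>p\<^sup>(\<^sup>j\<^sup>) a / j!\<close>.\<close>
definition taylor_coeff :: "'a::comm_ring_1 \<Rightarrow> nat \<Rightarrow> 'a poly \<Rightarrow> 'a" where
  "taylor_coeff a j p = coeff (pcompose p [:a, 1:]) j"

lemma taylor_coeff_smult: "taylor_coeff a j (Polynomial.smult c p) = c * taylor_coeff a j p"
  unfolding taylor_coeff_def by (simp add: pcompose_smult)

lemma taylor_coeff_sum: "taylor_coeff a j (sum f A) = (\<Sum>i\<in>A. taylor_coeff a j (f i))"
  unfolding taylor_coeff_def by (simp add: pcompose_sum coeff_sum)

lemma pcompose_power: "pcompose (p ^ k) q = pcompose p q ^ k"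
  for p q :: "'a::comm_semiring_1 poly"
  by (induction k) (simp_all add: pcompose_mult pcompose_1)

lemma taylor_coeff_monom:
  "taylor_coeff a j (monom 1 r) = (if j \<le> r then of_nat (r choose j) * a ^ (r - j) else 0)"
proof -
  have "pcompose (monom 1 r) [:a, 1:] = [:a, 1:] ^ r"
    unfolding monom_altdef pcompose_smult pcompose_power by (simp add: pcompose_pCons)
  moreover have "coeff ([:a, 1:] ^ r) j = 0" if "\<not> j \<le> r"
    using that by (intro coeff_eq_0) (simp add: degree_linear_power)
  ultimately show ?thesis unfolding taylor_coeff_def
    using coeff_linear_poly_power[of j r a 1] by auto
qed

lemma taylor_coeff_eq_sum_monom:
  assumes "degree q \<le> N"
  shows "taylor_coeff a j q = (\<Sum>d\<le>N. coeff q d * taylor_coeff a j (monom 1 d))"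
proof -
  have "taylor_coeff a j q = taylor_coeff a j (\<Sum>d\<le>N. Polynomial.smult (coeff q d) (monom 1 d))"
    using poly_as_sum_of_monoms'[OF assms] by (simp add: smult_monom)
  then show ?thesis by (simp add: taylor_coeff_sum taylor_coeff_smult)
qed

lemma pcompose_shift_linear: "pcompose [:- a, 1:] [:a, 1:] = monom 1 1" for a :: "'a::comm_ring_1"
  by (simp add: pcompose_pCons monom_Suc)

lemma taylor_coeff_eq_0_if_dvd:
  assumes "[:- a, 1:] ^ k dvd q" and "j < k"
  shows "taylor_coeff a j q = 0"
proof -
  obtain r where r: "q = [:- a, 1:] ^ k * r" using assms(1) by (auto elim: dvdE)
  have "pcompose q [:a, 1:] = monom 1 k * pcompose r [:a, 1:]"
    unfolding r pcompose_mult pcompose_power pcompose_shift_linear by (simp add: monom_altdef)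
  with assms(2) show ?thesis unfolding taylor_coeff_def by (simp add: coeff_monom_mult)
qed

lemma taylor_coeff_linear_power_mult: "taylor_coeff a j ([:- a, 1:] ^ j * q) = poly q a"
proof -
  have "pcompose ([:- a, 1:] ^ j * q) [:a, 1:] = monom 1 j * pcompose q [:a, 1:]"
    unfolding pcompose_mult pcompose_power pcompose_shift_linear by (simp add: monom_altdef)
  then show ?thesis unfolding taylor_coeff_def
    by (simp add: coeff_monom_mult poly_0_coeff_0[symmetric] poly_pcompose)
qed

lemma sums_taylor_coeff_monom:
  fixes a x :: real
  shows "(\<lambda>m. taylor_coeff a j (monom 1 m) / fact m * x ^ m) sums (x ^ j * exp (x * a) / fact j)"
proof -
  define f where "f m = taylor_coeff a j (monom 1 m) / fact m * x ^ m" for m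
  have "f (i + j) = x ^ j / fact j * ((x * a) ^ i /\<^sub>R fact i)" for i
  proof -
    have "real ((i + j) choose j) = fact (i + j) / (fact j * fact i)"
      using binomial_fact[of j "i + j", where 'a=real] by simp
    then show ?thesis
      unfolding f_def taylor_coeff_monom by (simp add: power_add power_mult_distrib field_simps)
  qed
  then have "(\<lambda>i. f (i + j)) sums (x ^ j * exp (x * a) / fact j)"
    using sums_mult[OF exp_converges, of "x ^ j / fact j" "x * a"] by simp
  moreover have "f i = 0" if "i < j" for i
    using that unfolding f_def taylor_coeff_monom by simp
  ultimately show ?thesis unfolding f_def[symmetric] using sums_zero_iff_shift[of j f] by blast
qed

definition block_labels :: "(nat \<Rightarrow> nat) \<Rightarrow> nat \<Rightarrow> (nat \<times> nat) list" where
  "block_labels m s = concat (map (\<lambda>i. map (\<lambda>j. (i, j)) [0..<m i]) [0..<s])"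

lemma block_labels_Suc: "block_labels m (Suc s) = block_labels m s @ map (\<lambda>j. (s, j)) [0..<m s]"
  unfolding block_labels_def by simp

lemma length_block_labels: "length (block_labels m s) = (\<Sum>i<s. m i)"
  by (induction s) (simp_all add: block_labels_Suc, simp add: block_labels_def)

lemma nth_block_labels:
  assumes "c < length (block_labels m s)"
  shows "fst (block_labels m s ! c) < s \<and> snd (block_labels m s ! c) < m (fst (block_labels m s ! c))
    \<and> c = (\<Sum>i<fst (block_labels m s ! c). m i) + snd (block_labels m s ! c)"
  using assms
proof (induction s arbitrary: c)
  case 0 then show ?case by (simp add: block_labels_def)
next
  case (Suc s)
  show ?case
  proof (cases "c < length (block_labels m s)")
    case True
    then show ?thesis using Suc.IH[OF True] by (auto simp: block_labels_Suc nth_append)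
  next
    case False
    then show ?thesis using Suc.prems by (auto simp: block_labels_Suc nth_append length_block_labels)
  qed
qed

lemma block_labels_nth_offset:
  assumes "i < s" and "j < m i"
  shows "(\<Sum>i'<i. m i') + j < length (block_labels m s)
    \<and> block_labels m s ! ((\<Sum>i'<i. m i') + j) = (i, j)"
  using assms
proof (induction s)
  case 0 then show ?case by simp
next
  case (Suc s)
  show ?case
  proof (cases "i < s")
    case True
    then show ?thesis using Suc.IH[OF True Suc.prems(2)] by (simp add: block_labels_Suc nth_append)
  next
    case False
    with Suc.prems have "i = s" by simp
    with Suc.prems show ?thesis by (simp add: block_labels_Suc nth_append length_block_labels)
  qed
qed

locale confluent_vandermonde =
  fixes y :: "nat \<Rightarrow> real" and n :: nat
  assumes n_pos: "n \<ge> 1"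
begin

text \<open>The nodes are the distinct values \<open>\<lambda>\<^sub>0 < \<dots> < \<lambda>\<^sub>s\<^sub>-\<^sub>1\<close> of \<open>y\<close> (indexed from 0); column \<open>c\<close>
  of \<open>M\<close> carries the label \<open>(col_block c, col_order c)\<close>, i.e. the derivative of order
  \<open>col_order c\<close> at \<open>col_node c\<close>, and the columns of block \<open>i\<close> start at index \<open>block_start i\<close>.\<close>
definition nodes :: "real list" where "nodes = dvals y n"
definition num_nodes :: nat where "num_nodes = length nodes"
definition node_mult :: "nat \<Rightarrow> nat" where "node_mult i = mult y n (nodes ! i)"
definition col_block :: "nat \<Rightarrow> nat" where "col_block c = fst (col_labels y n ! c)"
definition col_order :: "nat \<Rightarrow> nat" where "col_order c = snd (col_labels y n ! c)"
definition col_node :: "nat \<Rightarrow> real" where "col_node c = nodes ! col_block c"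
definition block_start :: "nat \<Rightarrow> nat" where "block_start i = (\<Sum>i'<i. node_mult i')"

lemma col_labels_eq: "col_labels y n = block_labels node_mult num_nodes"
  unfolding col_labels_def block_labels_def node_mult_def num_nodes_def nodes_def ..

lemma nodes_less: "i < j \<Longrightarrow> j < num_nodes \<Longrightarrow> nodes ! i < nodes ! j"
  unfolding num_nodes_def nodes_def dvals_def
  by (rule sorted_wrt_nth_less[OF strict_sorted_list_of_set]) auto

lemma sum_node_mult: "(\<Sum>i<num_nodes. node_mult i) = n"
proof -
  have "distinct nodes" and "set nodes = y ` {..<n}"
    unfolding nodes_def dvals_def by simp_all
  have "n = (\<Sum>v\<in>y ` {..<n}. card {k. k < n \<and> y k = v})"
    using sum.image_gen[of "{..<n}" "\<lambda>_. 1::nat" y] by simp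
  also have "\<dots> = (\<Sum>v\<in>set nodes. card {k. k < n \<and> y k = v})"
    unfolding \<open>set nodes = y ` {..<n}\<close> ..
  also have "\<dots> = sum_list (map (\<lambda>v. card {k. k < n \<and> y k = v}) nodes)"
    by (rule sum_list_distinct_conv_sum_set[OF \<open>distinct nodes\<close>, symmetric])
  also have "\<dots> = (\<Sum>i<num_nodes. node_mult i)"
    unfolding sum_list_sum_nth num_nodes_def node_mult_def mult_def by (simp add: atLeast0LessThan)
  finally show ?thesis by simp
qed

lemma length_col_labels: "length (col_labels y n) = n"
  unfolding col_labels_eq length_block_labels sum_node_mult ..

lemma col_label:
  "c < n \<Longrightarrow> col_block c < num_nodes \<and> col_order c < node_mult (col_block c)
     \<and> c = block_start (col_block c) + col_order c"
  using nth_block_labels[of c node_mult num_nodes] length_col_labels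
  unfolding col_block_def col_order_def block_start_def col_labels_eq by auto

lemma col_label_offset:
  "i < num_nodes \<Longrightarrow> j < node_mult i \<Longrightarrow>
     block_start i + j < n \<and> col_block (block_start i + j) = i \<and> col_order (block_start i + j) = j"
  using block_labels_nth_offset[of i num_nodes j node_mult] length_col_labels
  unfolding col_block_def col_order_def block_start_def col_labels_eq by auto

lemma col_less_if_block_less:
  assumes "l < n" "c < n" "col_block l < col_block c"
  shows "l < c"
proof -
  have "block_start (col_block l) + node_mult (col_block l) \<le> block_start (col_block c)"
    using assms(3) sum_mono2[of "{..<col_block c}" "{..<Suc (col_block l)}" node_mult]
    unfolding block_start_def by auto
  with col_label[OF assms(1)] col_label[OF assms(2)] show ?thesis by linarith
qed

lemma block_mono: "l < n \<Longrightarrow> c < n \<Longrightarrow> l < c \<Longrightarrow> col_block l \<le> col_block c"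
  using col_less_if_block_less[of c l] by force

lemma earlier_cols_in_block:
  assumes "c < n"
  shows "{l. l < c \<and> col_block l = col_block c} = (\<lambda>j. block_start (col_block c) + j) ` {..<col_order c}"
proof (intro equalityI subsetI)
  fix l assume "l \<in> {l. l < c \<and> col_block l = col_block c}"
  with assms col_label[of l] col_label[of c] show "l \<in> (\<lambda>j. block_start (col_block c) + j) ` {..<col_order c}"
    by (auto intro!: image_eqI[of _ _ "col_order l"])
next
  fix l assume "l \<in> (\<lambda>j. block_start (col_block c) + j) ` {..<col_order c}"
  with assms col_label[of c] col_label_offset[of "col_block c"]
  show "l \<in> {l. l < c \<and> col_block l = col_block c}" by auto
qed

lemma card_earlier_cols_in_block: "c < n \<Longrightarrow> card {l. l < c \<and> col_block l = col_block c} = col_order c"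
  by (simp add: earlier_cols_in_block card_image inj_on_def)

lemma card_block: "i < num_nodes \<Longrightarrow> card {l. l < n \<and> col_block l = i} = node_mult i"
proof -
  assume i: "i < num_nodes"
  have "{l. l < n \<and> col_block l = i} = (\<lambda>j. block_start i + j) ` {..<node_mult i}"
    using col_label col_label_offset[OF i] by force
  then show ?thesis by (simp add: card_image inj_on_def)
qed

lemma prod_over_blocks: "(\<Prod>l<n. H (col_block l)) = (\<Prod>i<num_nodes. (H i :: real) ^ node_mult i)"
proof -
  have "(\<Prod>l<n. H (col_block l)) = (\<Prod>i<num_nodes. \<Prod>l\<in>{l \<in> {..<n}. col_block l = i}. H (col_block l))"
    by (rule prod.group[symmetric]) (use col_label in auto)
  also have "\<dots> = (\<Prod>i<num_nodes. H i ^ node_mult i)"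
  proof (rule prod.cong[OF refl])
    fix i assume "i \<in> {..<num_nodes}"
    have "(\<Prod>l\<in>{l \<in> {..<n}. col_block l = i}. H (col_block l)) = (\<Prod>l\<in>{l. l < n \<and> col_block l = i}. H i)"
      by (rule prod.cong) auto
    with \<open>i \<in> {..<num_nodes}\<close> show "(\<Prod>l\<in>{l \<in> {..<n}. col_block l = i}. H (col_block l)) = H i ^ node_mult i"
      by (simp add: card_block)
  qed
  finally show ?thesis .
qed

definition col_taylor :: "real poly \<Rightarrow> nat \<Rightarrow> real" where
  "col_taylor p c = taylor_coeff (col_node c) (col_order c) p"

definition last_row_mat :: "(nat \<Rightarrow> real) \<Rightarrow> real mat" where
  "last_row_mat v = mat n n (\<lambda>(r, c). if r < n - 1 then col_taylor (monom 1 r) c else v c)"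

definition last_cofactor :: "nat \<Rightarrow> real" where
  "last_cofactor c = cofactor (last_row_mat (\<lambda>_. 0)) (n - 1) c"

definition power_det :: "nat \<Rightarrow> real" where
  "power_det m = det (last_row_mat (col_taylor (monom 1 m)))"

definition conf_vandermonde_det :: real where
  "conf_vandermonde_det = power_det (n - 1)"

definition node_poly :: "real poly" where
  "node_poly = (\<Prod>k<n. [:- y k, 1:])"

lemma last_row_mat_carrier: "last_row_mat v \<in> carrier_mat n n"
  unfolding last_row_mat_def by simp

lemma det_last_row_mat: "det (last_row_mat v) = (\<Sum>c<n. v c * last_cofactor c)"
proof -
  have "det (last_row_mat v) = (\<Sum>c<n. last_row_mat v $$ (n - 1, c) * cofactor (last_row_mat v) (n - 1) c)"
    by (rule laplace_expansion_row[OF last_row_mat_carrier]) (use n_pos in simp)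
  also have "\<dots> = (\<Sum>c<n. v c * last_cofactor c)"
  proof (rule sum.cong[OF refl])
    fix c assume c: "c \<in> {..<n}"
    have "mat_delete (last_row_mat v) (n - 1) c = mat_delete (last_row_mat (\<lambda>_. 0)) (n - 1) c"
      by (rule eq_matI) (auto simp: mat_delete_def last_row_mat_def)
    with c n_pos show "last_row_mat v $$ (n - 1, c) * cofactor (last_row_mat v) (n - 1) c = v c * last_cofactor c"
      unfolding last_cofactor_def cofactor_def by (simp add: last_row_mat_def)
  qed
  finally show ?thesis .
qed

lemma power_det_eq_0: "m < n - 1 \<Longrightarrow> power_det m = 0"
  unfolding power_det_def
  by (rule det_identical_rows[OF last_row_mat_carrier, of m "n - 1"])
     (auto intro!: eq_vecI simp: last_row_mat_def)

lemma det_last_row_mat_poly: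
  assumes "degree q \<le> N"
  shows "det (last_row_mat (col_taylor q)) = (\<Sum>d\<le>N. coeff q d * power_det d)"
proof -
  have "det (last_row_mat (col_taylor q)) =
      (\<Sum>c<n. (\<Sum>d\<le>N. coeff q d * col_taylor (monom 1 d) c) * last_cofactor c)"
    unfolding det_last_row_mat col_taylor_def taylor_coeff_eq_sum_monom[OF assms] ..
  also have "\<dots> = (\<Sum>d\<le>N. coeff q d * (\<Sum>c<n. col_taylor (monom 1 d) c * last_cofactor c))"
    by (simp add: sum_distrib_right sum_distrib_left mult.assoc sum.swap[of _ "{..<n}"])
  finally show ?thesis unfolding power_det_def det_last_row_mat .
qed

lemma linear_power_dvd_node_poly: "c < n \<Longrightarrow> [:- col_node c, 1:] ^ node_mult (col_block c) dvd node_poly"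
proof -
  assume c: "c < n"
  let ?A = "{k. k < n \<and> y k = col_node c}"
  have "card ?A = node_mult (col_block c)"
    using col_label[OF c] unfolding node_mult_def mult_def col_node_def by simp
  then have "(\<Prod>k\<in>?A. [:- y k, 1:]) = [:- col_node c, 1:] ^ node_mult (col_block c)"
    by simp
  moreover have "(\<Prod>k\<in>?A. [:- y k, 1:]) dvd node_poly"
    unfolding node_poly_def by (rule prod_dvd_prod_subset) auto
  ultimately show ?thesis by simp
qed

lemma det_last_row_mat_node_poly_mult: "det (last_row_mat (col_taylor (q * node_poly))) = 0"
proof -
  have "col_taylor (q * node_poly) c = 0" if "c < n" for c
    unfolding col_taylor_def using col_label[OF that] linear_power_dvd_node_poly[OF that]
    by (intro taylor_coeff_eq_0_if_dvd[of _ "node_mult (col_block c)"]) auto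
  then show ?thesis unfolding det_last_row_mat by simp
qed

lemma degree_node_poly: "degree node_poly = n"
  unfolding node_poly_def by (subst degree_prod_eq_sum_degree) auto

lemma coeff_node_poly_n: "coeff node_poly n = 1"
  using lead_coeff_prod[of "\<lambda>k. [:- y k, 1:]" "{..<n}"] degree_node_poly
  unfolding node_poly_def by simp

lemma power_det_recurrence:
  "(\<Sum>i\<le>m. coeff (reflect_poly node_poly) i * power_det (m - i)) =
     (if m = n - 1 then conf_vandermonde_det else 0)"
proof (cases "m \<ge> n")
  case True
  let ?Q = "monom 1 (m - n) * node_poly"
  have "degree ?Q \<le> m"
    using degree_mult_le[of "monom 1 (m - n)" node_poly] degree_node_poly True
    by (metis add.commute degree_monom_eq le_add_diff_inverse one_neq_zero)
  then have "0 = (\<Sum>d\<le>m. coeff ?Q d * power_det d)"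
    using det_last_row_mat_poly det_last_row_mat_node_poly_mult[of "monom 1 (m - n)"] by simp
  also have "\<dots> = (\<Sum>i\<le>m. coeff ?Q (m - i) * power_det (m - i))"
    by (rule sum.reindex_bij_witness[where i="\<lambda>i. m - i" and j="\<lambda>i. m - i"]) auto
  also have "\<dots> = (\<Sum>i\<le>m. coeff (reflect_poly node_poly) i * power_det (m - i))"
    using True by (intro sum.cong refl)
      (auto simp: coeff_monom_mult coeff_reflect_poly degree_node_poly coeff_eq_0)
  finally show ?thesis using True n_pos by simp
next
  case False
  have "(\<Sum>i\<le>m. coeff (reflect_poly node_poly) i * power_det (m - i)) =
      (\<Sum>i\<le>m. if i = 0 then if m = n - 1 then conf_vandermonde_det else 0 else 0)"
  proof (rule sum.cong[OF refl])
    fix i assume "i \<in> {..m}"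
    show "coeff (reflect_poly node_poly) i * power_det (m - i) =
        (if i = 0 then if m = n - 1 then conf_vandermonde_det else 0 else 0)"
    proof (cases "i = 0")
      case True
      then show ?thesis using False power_det_eq_0[of m] coeff_node_poly_n
        unfolding conf_vandermonde_det_def coeff_reflect_poly degree_node_poly by auto
    next
      case False': False
      then show ?thesis using False power_det_eq_0[of "m - i"] \<open>i \<in> {..m}\<close> by auto
    qed
  qed
  then show ?thesis by simp
qed

lemma fps_power_det:
  "fps_of_poly (reflect_poly node_poly) * Abs_fps power_det = fps_const conf_vandermonde_det * fps_X ^ (n - 1)"
  by (rule fps_ext)
     (simp add: fps_mult_nth[of "fps_of_poly _"] atLeast0AtMost power_det_recurrence fps_X_power_iff)

lemma power_det_eq: "power_det m = conf_vandermonde_det * divdiff_pow n y m"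
proof -
  obtain k where k: "n = Suc k" using n_pos by (cases n) auto
  have "fps_of_poly (reflect_poly node_poly) = (\<Prod>k<n. 1 - fps_const (y k) * fps_X)"
    unfolding node_poly_def reflect_poly_prod fps_of_poly_prod fps_of_poly_reflect_linear ..
  then have "Abs_fps (divdiff_pow n y) * fps_of_poly (reflect_poly node_poly) = fps_X ^ (n - 1)"
    using fps_divdiff_pow[of k y] k by simp
  then have "fps_of_poly (reflect_poly node_poly) * Abs_fps power_det =
      fps_of_poly (reflect_poly node_poly) * (fps_const conf_vandermonde_det * Abs_fps (divdiff_pow n y))"
    unfolding fps_power_det by (simp add: mult_ac)
  moreover have "fps_of_poly (reflect_poly node_poly) \<noteq> 0"
    using coeff_node_poly_n
    by (metis coeff_0_reflect_poly_0_iff fps_of_poly_nth fps_zero_nth leading_coeff_0_iff zero_neq_one)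
  ultimately have "Abs_fps power_det = fps_const conf_vandermonde_det * Abs_fps (divdiff_pow n y)"
    by simp
  then show ?thesis by (metis fps_mult_left_const_nth fps_nth_Abs_fps)
qed

lemma Mmat_eq_last_row_mat:
  "Mmat y n c = last_row_mat (\<lambda>col. c ^ col_order col * exp (c * col_node col) / fact (col_order col))"
  by (rule eq_matI) (auto simp: Mmat_def last_row_mat_def col_taylor_def taylor_coeff_monom Let_def
      col_block_def col_order_def col_node_def nodes_def)

lemma det_Mmat: "det (Mmat y n c) = conf_vandermonde_det * divdiff_exp n y c"
proof -
  obtain k where k: "n = Suc k" using n_pos by (cases n) auto
  have "(\<lambda>m. col_taylor (monom 1 m) col / fact m * c ^ m) sums
      (c ^ col_order col * exp (c * col_node col) / fact (col_order col))" for col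
    unfolding col_taylor_def by (rule sums_taylor_coeff_monom)
  then have "(\<lambda>m. \<Sum>col<n. col_taylor (monom 1 m) col / fact m * c ^ m * last_cofactor col) sums det (Mmat y n c)"
    unfolding Mmat_eq_last_row_mat det_last_row_mat by (intro sums_sum sums_mult2)
  moreover have "(\<Sum>col<n. col_taylor (monom 1 m) col / fact m * c ^ m * last_cofactor col) =
      conf_vandermonde_det * (divdiff_pow n y m / fact m * c ^ m)" for m
  proof -
    have "(\<Sum>col<n. col_taylor (monom 1 m) col / fact m * c ^ m * last_cofactor col) = power_det m / fact m * c ^ m"
      unfolding power_det_def det_last_row_mat sum_divide_distrib sum_distrib_right
      by (intro sum.cong) auto
    then show ?thesis by (simp add: power_det_eq)
  qed
  moreover have "(\<lambda>m. conf_vandermonde_det * (divdiff_pow n y m / fact m * c ^ m)) sums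
      (conf_vandermonde_det * divdiff_exp n y c)"
    unfolding divdiff_exp_def k by (rule sums_mult[OF summable_sums[OF summable_divdiff_exp]])
  ultimately show ?thesis using sums_unique2 by simp
qed

definition partial_node_poly :: "nat \<Rightarrow> real poly" where
  "partial_node_poly r = (\<Prod>l<r. [:- col_node l, 1:])"

definition partial_node_coeff_mat :: "real mat" where
  "partial_node_coeff_mat = mat n n (\<lambda>(r, k). coeff (partial_node_poly r) k)"

lemma degree_partial_node_poly: "degree (partial_node_poly r) = r"
  unfolding partial_node_poly_def by (subst degree_prod_eq_sum_degree) auto

lemma coeff_partial_node_poly_r: "coeff (partial_node_poly r) r = 1"
  using lead_coeff_prod[of "\<lambda>l. [:- col_node l, 1:]" "{..<r}"] degree_partial_node_poly[of r]
  unfolding partial_node_poly_def by simp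

lemma col_taylor_partial_node_poly_below:
  assumes "j < i" and "i < n"
  shows "col_taylor (partial_node_poly i) j = 0"
proof -
  let ?A = "{l. l < i \<and> col_block l = col_block j}"
  have "insert j {l. l < j \<and> col_block l = col_block j} \<subseteq> ?A"
    using assms(1) by auto
  then have "card (insert j {l. l < j \<and> col_block l = col_block j}) \<le> card ?A"
    by (rule card_mono[rotated]) auto
  then have "col_order j < card ?A"
    using assms card_earlier_cols_in_block[of j] by simp
  have "(\<Prod>l\<in>?A. [:- col_node l, 1:]) = [:- col_node j, 1:] ^ card ?A"
    by (simp add: col_node_def)
  moreover have "(\<Prod>l\<in>?A. [:- col_node l, 1:]) dvd partial_node_poly i"
    unfolding partial_node_poly_def by (rule prod_dvd_prod_subset) auto
  ultimately have "[:- col_node j, 1:] ^ card ?A dvd partial_node_poly i"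
    by simp
  then show ?thesis
    unfolding col_taylor_def using \<open>col_order j < card ?A\<close> by (rule taylor_coeff_eq_0_if_dvd)
qed

lemma col_taylor_partial_node_poly_diag:
  assumes "c < n"
  shows "col_taylor (partial_node_poly c) c =
           (\<Prod>l\<in>{l. l < c \<and> col_block l \<noteq> col_block c}. col_node c - col_node l)"
proof -
  let ?A = "{l. l < c \<and> col_block l = col_block c}" and ?B = "{l. l < c \<and> col_block l \<noteq> col_block c}"
  have "{..<c} = ?A \<union> ?B" by auto
  then have "partial_node_poly c = (\<Prod>l\<in>?A. [:- col_node l, 1:]) * (\<Prod>l\<in>?B. [:- col_node l, 1:])"
    unfolding partial_node_poly_def by (simp only:) (rule prod.union_disjoint, auto)
  also have "(\<Prod>l\<in>?A. [:- col_node l, 1:]) = [:- col_node c, 1:] ^ col_order c"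
    using card_earlier_cols_in_block[OF assms] by (simp add: col_node_def)
  finally show ?thesis
    unfolding col_taylor_def by (simp add: taylor_coeff_linear_power_mult poly_prod)
qed

lemma det_partial_node_coeff_mat: "det partial_node_coeff_mat = 1"
proof -
  have "det partial_node_coeff_mat = prod_list (diag_mat partial_node_coeff_mat)"
    by (rule det_lower_triangular[of n])
       (auto simp: partial_node_coeff_mat_def coeff_eq_0 degree_partial_node_poly)
  also have "\<dots> = 1"
    by (simp add: prod_list_diag_prod partial_node_coeff_mat_def coeff_partial_node_poly_r)
  finally show ?thesis .
qed

lemma last_row_mat_power_entry:
  assumes "r < n" and "c < n"
  shows "last_row_mat (col_taylor (monom 1 (n - 1))) $$ (r, c) = col_taylor (monom 1 r) c"
proof (cases "r < n - 1")
  case False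
  then have "r = n - 1" using assms(1) by linarith
  with assms show ?thesis by (simp add: last_row_mat_def)
qed (use assms in \<open>simp add: last_row_mat_def\<close>)

lemma partial_node_coeff_mat_mult_entry:
  assumes "r < n" and "c < n"
  shows "(partial_node_coeff_mat * last_row_mat (col_taylor (monom 1 (n - 1)))) $$ (r, c) =
           col_taylor (partial_node_poly r) c"
proof -
  have "(partial_node_coeff_mat * last_row_mat (col_taylor (monom 1 (n - 1)))) $$ (r, c) =
      (\<Sum>k\<in>{0..<n}. coeff (partial_node_poly r) k * last_row_mat (col_taylor (monom 1 (n - 1))) $$ (k, c))"
    using assms carrier_matD[OF last_row_mat_carrier]
    by (simp add: scalar_prod_def partial_node_coeff_mat_def)
  also have "\<dots> = (\<Sum>k\<in>{0..<n}. coeff (partial_node_poly r) k * col_taylor (monom 1 k) c)"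
  proof (rule sum.cong[OF refl])
    fix k assume "k \<in> {0..<n}"
    then show "coeff (partial_node_poly r) k * last_row_mat (col_taylor (monom 1 (n - 1))) $$ (k, c) =
        coeff (partial_node_poly r) k * col_taylor (monom 1 k) c"
      using last_row_mat_power_entry[of k c] assms by simp
  qed
  also have "\<dots> = (\<Sum>k\<le>n - 1. coeff (partial_node_poly r) k * col_taylor (monom 1 k) c)"
    by (rule sum.cong) (use n_pos in auto)
  also have "\<dots> = col_taylor (partial_node_poly r) c"
    unfolding col_taylor_def using assms degree_partial_node_poly[of r]
    by (intro taylor_coeff_eq_sum_monom[symmetric]) simp
  finally show ?thesis .
qed

lemma conf_vandermonde_det_eq_prod_cols:
  "conf_vandermonde_det = (\<Prod>c<n. \<Prod>l\<in>{l. l < c \<and> col_block l \<noteq> col_block c}. col_node c - col_node l)"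
proof -
  let ?T = partial_node_coeff_mat and ?V = "last_row_mat (col_taylor (monom 1 (n - 1)))"
  have T: "?T \<in> carrier_mat n n" unfolding partial_node_coeff_mat_def by simp
  have TV: "?T * ?V \<in> carrier_mat n n" using T last_row_mat_carrier by simp
  have "upper_triangular (?T * ?V)"
    unfolding upper_triangular_def
  proof (intro allI impI)
    fix i j assume "i < dim_row (?T * ?V)" and "j < i"
    then have "i < n" and "j < n" using TV by auto
    show "(?T * ?V) $$ (i, j) = 0"
      by (rule trans[OF partial_node_coeff_mat_mult_entry[OF \<open>i < n\<close> \<open>j < n\<close>]
                        col_taylor_partial_node_poly_below[OF \<open>j < i\<close> \<open>i < n\<close>]])
  qed
  have "conf_vandermonde_det = det (?T * ?V)"
    using det_mult[OF T last_row_mat_carrier] det_partial_node_coeff_mat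
    unfolding conf_vandermonde_det_def power_det_def by simp
  also have "\<dots> = prod_list (diag_mat (?T * ?V))"
    by (rule det_upper_triangular[OF \<open>upper_triangular (?T * ?V)\<close> TV])
  also have "\<dots> = (\<Prod>c<n. (?T * ?V) $$ (c, c))"
    using carrier_matD[OF T] by (simp add: prod_list_diag_prod atLeast0LessThan)
  also have "\<dots> = (\<Prod>c<n. col_taylor (partial_node_poly c) c)"
    by (rule prod.cong[OF refl]) (rule partial_node_coeff_mat_mult_entry; simp)
  finally show ?thesis by (simp add: col_taylor_partial_node_poly_diag)
qed

lemma earlier_cols_other_block:
  assumes "c < n"
  shows "{l. l < c \<and> col_block l \<noteq> col_block c} = {l \<in> {..<n}. col_block l < col_block c}"
proof (intro equalityI subsetI)
  fix l assume "l \<in> {l. l < c \<and> col_block l \<noteq> col_block c}"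
  with assms block_mono[of l c] show "l \<in> {l \<in> {..<n}. col_block l < col_block c}"
    by auto
next
  fix l assume "l \<in> {l \<in> {..<n}. col_block l < col_block c}"
  with assms col_less_if_block_less[of l c] show "l \<in> {l. l < c \<and> col_block l \<noteq> col_block c}"
    by auto
qed

lemma conf_vandermonde_det_eq:
  "conf_vandermonde_det = (\<Prod>j<num_nodes. \<Prod>i<j. (nodes ! j - nodes ! i) ^ (node_mult i * node_mult j))"
proof -
  define G where "G j = (\<Prod>l<n. if col_block l < j then nodes ! j - nodes ! col_block l else 1)" for j
  have G_eq: "G j = (\<Prod>i<j. (nodes ! j - nodes ! i) ^ node_mult i)" if "j < num_nodes" for j
  proof -
    have "G j = (\<Prod>i<num_nodes. (if i < j then nodes ! j - nodes ! i else 1) ^ node_mult i)"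
      unfolding G_def by (rule prod_over_blocks)
    also have "\<dots> = (\<Prod>i<num_nodes. if i < j then (nodes ! j - nodes ! i) ^ node_mult i else 1)"
      by (rule prod.cong) auto
    also have "\<dots> = (\<Prod>i\<in>{i \<in> {..<num_nodes}. i < j}. (nodes ! j - nodes ! i) ^ node_mult i)"
      by (rule prod.inter_filter[symmetric]) simp
    also have "{i \<in> {..<num_nodes}. i < j} = {..<j}" using that by auto
    finally show ?thesis .
  qed
  have col_eq: "(\<Prod>l\<in>{l. l < c \<and> col_block l \<noteq> col_block c}. col_node c - col_node l) = G (col_block c)"
    if "c < n" for c
    unfolding earlier_cols_other_block[OF that] G_def col_node_def by (rule prod.inter_filter) simp
  have "conf_vandermonde_det = (\<Prod>c<n. G (col_block c))"
    unfolding conf_vandermonde_det_eq_prod_cols by (rule prod.cong) (simp_all add: col_eq)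
  also have "\<dots> = (\<Prod>j<num_nodes. G j ^ node_mult j)"
    by (rule prod_over_blocks)
  also have "\<dots> = (\<Prod>j<num_nodes. \<Prod>i<j. (nodes ! j - nodes ! i) ^ (node_mult i * node_mult j))"
    by (rule prod.cong) (simp_all add: G_eq prod_power_distrib power_mult)
  finally show ?thesis .
qed

lemma node_differences_prod_nonzero:
  "(\<Prod>j<num_nodes. \<Prod>i<j. (nodes ! j - nodes ! i) ^ (node_mult i * node_mult j)) \<noteq> 0"
proof -
  have "nodes ! j - nodes ! i \<noteq> 0" if "i < j" "j < num_nodes" for i j
    using nodes_less[OF that] by simp
  then have "\<forall>j\<in>{..<num_nodes}. \<forall>i\<in>{..<j}. (nodes ! j - nodes ! i) ^ (node_mult i * node_mult j) \<noteq> 0"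
    by simp
  then show ?thesis by (simp add: prod_zero_iff del: power_eq_0_iff)
qed

end

theorem mainTheorem10:
  fixes y :: "nat \<Rightarrow> real" and n :: nat and \<gamma> :: real
  assumes "n \<ge> 1" and "0 \<le> \<gamma>" and "\<gamma> < 1"
  shows "iter_int (n - 1) 0 (1 - \<gamma>)
           (\<lambda>x. exp ((\<Sum>i<n - 1. y i * x i) + y (n - 1) * (1 - \<gamma> - (\<Sum>i<n - 1. x i))))
           (\<lambda>_. 0)
         = Determinant.det (Mmat y n (1 - \<gamma>)) /
           (\<Prod>j<length (dvals y n). \<Prod>i<j.
              (dvals y n ! j - dvals y n ! i) ^ (mult y n (dvals y n ! i) * mult y n (dvals y n ! j)))
       \<and> (\<forall>\<gamma>'. \<forall>r<n - 1. \<forall>c<n. Mmat y n (1 - \<gamma>) $$ (r, c) = Mmat y n (1 - \<gamma>') $$ (r, c))"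
proof -
  interpret confluent_vandermonde y n
    using assms(1) by unfold_locales
  have "iter_int (n - 1) 0 (1 - \<gamma>)
           (\<lambda>x. exp ((\<Sum>i<n - 1. y i * x i) + y (n - 1) * (1 - \<gamma> - (\<Sum>i<n - 1. x i))))
           (\<lambda>_. 0) = divdiff_exp n y (1 - \<gamma>)"
    using iter_int_exp_linear[where d=0 and k="n - 1" and D="n - 1" and C="1 - \<gamma>" and r="1 - \<gamma>"
        and x="\<lambda>_. 0" and y=y] assms by simp
  also have "\<dots> = det (Mmat y n (1 - \<gamma>)) / conf_vandermonde_det"
    using det_Mmat node_differences_prod_nonzero conf_vandermonde_det_eq by simp
  finally have "iter_int (n - 1) 0 (1 - \<gamma>)
           (\<lambda>x. exp ((\<Sum>i<n - 1. y i * x i) + y (n - 1) * (1 - \<gamma> - (\<Sum>i<n - 1. x i))))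
           (\<lambda>_. 0) = det (Mmat y n (1 - \<gamma>)) / conf_vandermonde_det" .
  moreover have "\<forall>\<gamma>'. \<forall>r<n - 1. \<forall>c<n. Mmat y n (1 - \<gamma>) $$ (r, c) = Mmat y n (1 - \<gamma>') $$ (r, c)"
    by (auto simp: Mmat_def Let_def)
  ultimately show ?thesis
    unfolding conf_vandermonde_det_eq num_nodes_def nodes_def node_mult_def by (rule conjI)
qed

end
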